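(* (1) Let $\mathbb{F}=\langle x_1,\dots,x_n,y_1,\dots,y_m\rangle$ be free, $e\in\langle y_1,\dots,y_m\rangle$, and $\rho\in\mathcal{R}(\mathbb{F})=\mathrm{Hom}(\mathbb{F},SL(2,\mathbb{C}))$ with $\operatorname{trace}(\rho(e))\neq -2$. Let $S=(U,\widetilde U,P)$ be a standard neighborhood of $\rho(e)$ and let $V\subset\mathcal{R}(\mathbb{F})$ be an open neighborhood of $\rho$ with $\mathrm{ev}_e(V)\subset U$. Then the map $\tau_H\colon V\times P\to\mathcal{R}(\mathbb{F})$ given by $\tau_H(\eta,z)(x_i)=\eta(x_i)$ and $\tau_H(\eta,z)(y_j)=$ the conjugate of $\eta(y_j)$ by $\exp(z\cdot\log(\eta(e)))$, is holomorphic. (2) Let $\mathbb{F}=\langle x_1,\dots,x_{n-1}\rangle*\langle t\rangle$, $e\in\langle x_1,\dots,x_{n-1}\rangle$, $\rho\in\mathcal{R}(\mathbb{F})$ with $\operatorname{trace}(\rho(e))\neq-2$, and $S=(U,\widetilde U,P)$, $V$ as in (1). Then the map $\tau_H\colon V\times P\to\mathcal{R}(\mathbb{F})$ given by $\tau_H(\eta,z)(x_i)=\eta(x_i)$, $\tau_H(\eta,z)(t)=\eta(t)\exp(z\cdot\log(\eta(e)))$, is holomorphic.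
   Context: $\mathcal{R}(\mathbb{F})=\mathrm{Hom}(\mathbb{F},SL(2,\mathbb{C}))\cong SL(2,\mathbb{C})^{r}\subset\mathbb{C}^{4r}$ for $\mathbb{F}$ free of rank $r$, and $\mathrm{ev}_g\colon\mathcal{R}(\mathbb{F})\to SL(2,\mathbb{C})$, $\eta\mapsto\eta(g)$. For $\epsilon>0$, $P_\epsilon$ is the $\epsilon$-neighborhood of $[0,1]$ in $\mathbb{C}$. A standard neighborhood of $g\in SL(2,\mathbb{C})$ (with $\operatorname{trace}g\ne-2$) is a tuple $(U_g,\widetilde U_g,P)$ where $P=P_\epsilon$, $\widetilde U_g\subset\mathfrak{sl}_2\mathbb{C}$ is an open neighborhood of some $v_g$ with $\exp(v_g)=g$, $U_g=\exp(\widetilde U_g)$, $\exp(P\cdot\widetilde U_g)\subset SL(2,\mathbb{C})\setminus\{-I\}$, $\exp$ restricted to the $\epsilon$-neighborhood of $\{sv_g:s\in[0,1]\}$ is biholomorphic onto its image, and $P\cdot\widetilde U_g$ is contained in that neighborhood. For $h\in U_g$, $\log(h)$ denotes the unique $v\in\widetilde U_g$ with $\exp(v)=h$. *)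

theory Defs
  imports "HOL-Analysis.Analysis"
begin

class complex_space = real_normed_vector +
  fixes cscale :: "complex \<Rightarrow> 'a \<Rightarrow> 'a"

instantiation complex :: complex_space
begin
definition cscale_complex :: "complex \<Rightarrow> complex \<Rightarrow> complex" where
  "cscale_complex c z = c * z"
instance ..
end

instantiation vec :: (complex_space, finite) complex_space
begin
definition cscale_vec :: "complex \<Rightarrow> ('a, 'b) vec \<Rightarrow> ('a, 'b) vec" where
  "cscale_vec c v = (\<chi> i. cscale c (v $ i))"
instance ..
end

instantiation prod :: (complex_space, complex_space) complex_space
begin
definition cscale_prod :: "complex \<Rightarrow> 'a \<times> 'b \<Rightarrow> 'a \<times> 'b" where
  "cscale_prod c p = (cscale c (fst p), cscale c (snd p))"
instance ..
end

definition C_linear :: "('a::complex_space \<Rightarrow> 'b::complex_space) \<Rightarrow> bool" where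
  "C_linear L \<longleftrightarrow> linear L \<and> (\<forall>c x. L (cscale c x) = cscale c (L x))"

definition holo_open :: "('a::complex_space \<Rightarrow> 'b::complex_space) \<Rightarrow> 'a set \<Rightarrow> bool" where
  "holo_open f W \<longleftrightarrow> open W \<and>
     (\<forall>x\<in>W. \<exists>D. (f has_derivative D) (at x) \<and> C_linear D)"

text \<open>Holomorphic on an arbitrary subset A (e.g. an open subset of an analytic
subvariety): locally the restriction of a holomorphic map on an open set.\<close>
definition holo_on :: "('a::complex_space \<Rightarrow> 'b::complex_space) \<Rightarrow> 'a set \<Rightarrow> bool" where
  "holo_on f A \<longleftrightarrow> (\<forall>x\<in>A. \<exists>W g. open W \<and> x \<in> W \<and> holo_open g W \<and>
                        (\<forall>y\<in>A \<inter> W. g y = f y))"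

definition biholo_onto :: "('a::complex_space \<Rightarrow> 'b::complex_space) \<Rightarrow> 'a set \<Rightarrow> bool" where
  "biholo_onto f A \<longleftrightarrow> inj_on f A \<and> holo_on f A \<and> holo_on (the_inv_into A f) (f ` A)"

type_synonym mat2 = "complex^2^2"

definition smat :: "complex \<Rightarrow> mat2 \<Rightarrow> mat2" where
  "smat c A = (\<chi> i j. c * A $ i $ j)"

primrec mpow :: "mat2 \<Rightarrow> nat \<Rightarrow> mat2" where
  "mpow A 0 = mat 1"
| "mpow A (Suc k) = A ** mpow A k"

definition mexp :: "mat2 \<Rightarrow> mat2" where
  "mexp A = (\<Sum>k. smat (inverse (fact k)) (mpow A k))"

definition SL2 :: "mat2 set" where
  "SL2 = {A. det A = 1}"

definition sl2 :: "mat2 set" where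
  "sl2 = {A. trace A = 0}"

text \<open>An element is given by
a word: a list of letters (generator, True) = g and (generator, False) = g^-1.
The representation variety R(F) = Hom(F, SL(2,C)) = SL(2,C)^r is the set of
tuples of SL(2,C) matrices indexed by the generators, inside C^(4r).\<close>

type_synonym 'a word = "('a \<times> bool) list"

definition Rvar :: "(mat2^'a::finite) set" where
  "Rvar = {\<eta>. \<forall>g. \<eta> $ g \<in> SL2}"

definition ev :: "'a word \<Rightarrow> mat2^'a::finite \<Rightarrow> mat2" where
  "ev w \<eta> = foldr (\<lambda>(g, b) M. (if b then \<eta> $ g else matrix_inv (\<eta> $ g)) ** M) w (mat 1)"

definition word_in :: "'a word \<Rightarrow> 'a set \<Rightarrow> bool" where
  "word_in w Y \<longleftrightarrow> (\<forall>l\<in>set w. fst l \<in> Y)"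

definition Pnbhd :: "real \<Rightarrow> complex set" where
  "Pnbhd \<epsilon> = {z. \<exists>s\<in>{0..1::real}. dist z (complex_of_real s) < \<epsilon>}"

definition PU :: "complex set \<Rightarrow> mat2 set \<Rightarrow> mat2 set" where
  "PU P Ut = {smat z v | z v. z \<in> P \<and> v \<in> Ut}"

definition std_nbhd :: "mat2 \<Rightarrow> mat2 set \<Rightarrow> mat2 set \<Rightarrow> real \<Rightarrow> bool" where
  "std_nbhd g U Ut \<epsilon> \<longleftrightarrow> \<epsilon> > 0 \<and>
     (\<exists>v. v \<in> Ut \<and> mexp v = g \<and>
        Ut \<subseteq> sl2 \<and> openin (top_of_set sl2) Ut \<and>
        U = mexp ` Ut \<and>
        mexp ` PU (Pnbhd \<epsilon>) Ut \<subseteq> SL2 - {- mat 1} \<and>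
        (let N = {w \<in> sl2. \<exists>s\<in>{0..1::real}. dist w (smat (complex_of_real s) v) < \<epsilon>}
         in biholo_onto mexp N \<and> PU (Pnbhd \<epsilon>) Ut \<subseteq> N))"

definition logS :: "mat2 set \<Rightarrow> mat2 \<Rightarrow> mat2" where
  "logS Ut h = (THE v. v \<in> Ut \<and> mexp v = h)"

definition conjm :: "mat2 \<Rightarrow> mat2 \<Rightarrow> mat2" where
  "conjm A B = A ** B ** matrix_inv A"

end

theory Submission
  imports Defs
begin

text \<open>On SL(2,C) the inverse of a matrix is its adjugate, so on the representation variety
the evaluation maps and both deformations coincide with maps that are polynomial in the matrix
entries. The only non-polynomial ingredients are log on U and exp on P * Ut, and these are
holomorphic because the standard neighbourhood makes exp biholomorphic on a neighbourhood of
P * Ut. Holomorphy on an arbitrary subset is local and stable under composition, which gives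
the claim.\<close>

section \<open>Complex differentiability at a point\<close>

definition holo_at :: "('a::complex_space \<Rightarrow> 'b::complex_space) \<Rightarrow> 'a \<Rightarrow> bool" where
  "holo_at f x \<longleftrightarrow> (\<exists>D. (f has_derivative D) (at x) \<and> C_linear D)"

lemma bounded_linear_vec_lambda:
  fixes f :: "'a::real_normed_vector \<Rightarrow> 'b::real_normed_vector^'n::finite"
  assumes "\<And>i. bounded_linear (\<lambda>h. f h $ i)"
  shows "bounded_linear f"
proof -
  have lin: "linear f"
    using assms[THEN bounded_linear.linear]
    unfolding linear_iff by (simp add: linear_add linear_scale vec_eq_iff)
  obtain K where K: "\<And>i h. norm (f h $ i) \<le> norm h * K i"
    using bounded_linear.bounded[OF assms] by metis
  show ?thesis
  proof (rule bounded_linear_intro[where K="sum K UNIV"])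
    show "f (x + y) = f x + f y" "f (r *\<^sub>R x) = r *\<^sub>R f x" for x y r
      using lin by (simp_all add: linear_add linear_scale)
    show "norm (f x) \<le> norm x * sum K UNIV" for x
    proof -
      have "norm (f x) \<le> (\<Sum>i\<in>UNIV. norm (f x $ i))"
        by (simp add: norm_vec_def L2_set_le_sum)
      also have "\<dots> \<le> (\<Sum>i\<in>UNIV. norm x * K i)"
        by (intro sum_mono K)
      finally show ?thesis
        by (simp add: sum_distrib_left)
    qed
  qed
qed

lemma has_derivative_vec_lambda:
  fixes f :: "'a::real_normed_vector \<Rightarrow> 'b::real_normed_vector^'n::finite"
  assumes "\<And>i. ((\<lambda>x. f x $ i) has_derivative (\<lambda>h. f' h $ i)) F"
  shows "(f has_derivative f') F"
  using assms unfolding has_derivative_def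
  by (auto intro: bounded_linear_vec_lambda vec_tendstoI)

lemma holo_open_iff_holo_at: "holo_open f W \<longleftrightarrow> open W \<and> (\<forall>x\<in>W. holo_at f x)"
  unfolding holo_open_def holo_at_def by simp

lemma holo_at_imp_isCont: "holo_at f x \<Longrightarrow> isCont f x"
  unfolding holo_at_def using has_derivative_continuous by blast

lemma C_linear_compose: "C_linear D \<Longrightarrow> C_linear E \<Longrightarrow> C_linear (E \<circ> D)"
  unfolding C_linear_def by (auto intro: linear_compose)

lemma holo_at_ident: "holo_at (\<lambda>y. y) x"
  unfolding holo_at_def C_linear_def
  by (auto intro!: exI[of _ "\<lambda>h. h"] has_derivative_ident simp: linear_iff)

lemma holo_at_const: "holo_at (\<lambda>y. c :: complex) x"
  unfolding holo_at_def C_linear_def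
  by (auto intro!: exI[of _ "\<lambda>h. 0"] simp: linear_iff cscale_complex_def)

lemma holo_at_compose:
  assumes "holo_at f x" and "holo_at g (f x)"
  shows "holo_at (\<lambda>y. g (f y)) x"
proof -
  obtain D where D: "(f has_derivative D) (at x)" "C_linear D"
    using assms(1) unfolding holo_at_def by blast
  obtain E where E: "(g has_derivative E) (at (f x))" "C_linear E"
    using assms(2) unfolding holo_at_def by blast
  have "((\<lambda>y. g (f y)) has_derivative E \<circ> D) (at x)"
    using diff_chain_at[OF D(1) E(1)] unfolding comp_def[of g f] .
  then show ?thesis
    unfolding holo_at_def using C_linear_compose[OF D(2) E(2)] by blast
qed

lemma holo_at_fst: "holo_at fst x"
  unfolding holo_at_def C_linear_def
  by (auto intro!: exI[of _ fst] has_derivative_fst[OF has_derivative_ident]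
      simp: linear_iff cscale_prod_def)

lemma holo_at_snd: "holo_at snd x"
  unfolding holo_at_def C_linear_def
  by (auto intro!: exI[of _ snd] has_derivative_snd[OF has_derivative_ident]
      simp: linear_iff cscale_prod_def)

lemma holo_at_Pair:
  assumes "holo_at f x" and "holo_at g x"
  shows "holo_at (\<lambda>y. (f y, g y)) x"
proof -
  obtain D where D: "(f has_derivative D) (at x)" "C_linear D"
    using assms(1) unfolding holo_at_def by blast
  obtain E where E: "(g has_derivative E) (at x)" "C_linear E"
    using assms(2) unfolding holo_at_def by blast
  have "C_linear (\<lambda>h. (D h, E h))"
    using D(2) E(2) unfolding C_linear_def by (auto simp: linear_iff cscale_prod_def)
  then show ?thesis
    unfolding holo_at_def using has_derivative_Pair[OF D(1) E(1)] by blast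
qed

lemma holo_at_vec_nth:
  assumes "holo_at f x"
  shows "holo_at (\<lambda>y. f y $ i) x"
proof -
  obtain D where D: "(f has_derivative D) (at x)" "C_linear D"
    using assms unfolding holo_at_def by blast
  have "C_linear (\<lambda>h. D h $ i)"
    using D(2) unfolding C_linear_def by (auto simp: linear_iff cscale_vec_def)
  then show ?thesis
    unfolding holo_at_def
    using bounded_linear.has_derivative[OF bounded_linear_vec_nth D(1)] by blast
qed

lemma holo_at_vec_lambda:
  assumes "\<And>i. holo_at (\<lambda>y. f y i) x"
  shows "holo_at (\<lambda>y. \<chi> i. f y i) x"
proof -
  obtain D where D: "\<And>i. ((\<lambda>y. f y i) has_derivative D i) (at x)" "\<And>i. C_linear (D i)"
    using assms unfolding holo_at_def by metis
  have "((\<lambda>y. \<chi> i. f y i) has_derivative (\<lambda>h. \<chi> i. D i h)) (at x)"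
    by (rule has_derivative_vec_lambda) (simp add: D(1))
  moreover have "C_linear (\<lambda>h. \<chi> i. D i h)"
    using D(2) unfolding C_linear_def by (auto simp: linear_iff vec_eq_iff cscale_vec_def)
  ultimately show ?thesis
    unfolding holo_at_def by blast
qed

lemma holo_at_add:
  assumes "holo_at f x" and "holo_at g x"
  shows "holo_at (\<lambda>y. f y + g y :: complex) x"
proof -
  obtain D where D: "(f has_derivative D) (at x)" "C_linear D"
    using assms(1) unfolding holo_at_def by blast
  obtain E where E: "(g has_derivative E) (at x)" "C_linear E"
    using assms(2) unfolding holo_at_def by blast
  have "C_linear (\<lambda>h. D h + E h)"
    using D(2) E(2) unfolding C_linear_def by (auto simp: linear_iff cscale_complex_def algebra_simps)
  then show ?thesis
    unfolding holo_at_def using has_derivative_add[OF D(1) E(1)] by blast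
qed

lemma holo_at_mult:
  assumes "holo_at f x" and "holo_at g x"
  shows "holo_at (\<lambda>y. f y * g y :: complex) x"
proof -
  obtain D where D: "(f has_derivative D) (at x)" "C_linear D"
    using assms(1) unfolding holo_at_def by blast
  obtain E where E: "(g has_derivative E) (at x)" "C_linear E"
    using assms(2) unfolding holo_at_def by blast
  have "C_linear (\<lambda>h. f x * E h + D h * g x)"
    using D(2) E(2) unfolding C_linear_def by (auto simp: linear_iff cscale_complex_def algebra_simps)
  then show ?thesis
    unfolding holo_at_def using has_derivative_mult[OF D(1) E(1)] by blast
qed

lemma holo_at_uminus: "holo_at f x \<Longrightarrow> holo_at (\<lambda>y. - f y :: complex) x"
  using holo_at_mult[OF holo_at_const[of "-1"], of f x] by simp

lemma holo_at_sum:
  "finite A \<Longrightarrow> (\<And>k. k \<in> A \<Longrightarrow> holo_at (\<lambda>y. f y k :: complex) x) \<Longrightarrow>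
    holo_at (\<lambda>y. \<Sum>k\<in>A. f y k) x"
  by (induction A rule: finite_induct) (auto intro: holo_at_add holo_at_const)

lemma holo_at_matrix_mult:
  fixes f g :: "'a::complex_space \<Rightarrow> complex^'n::finite^'n"
  assumes "holo_at f x" and "holo_at g x"
  shows "holo_at (\<lambda>y. f y ** g y) x"
  unfolding matrix_matrix_mult_def
  by (intro holo_at_vec_lambda holo_at_sum holo_at_mult holo_at_vec_nth assms finite)

lemma holo_at_smat: "holo_at f x \<Longrightarrow> holo_at g x \<Longrightarrow> holo_at (\<lambda>y. smat (f y) (g y)) x"
  unfolding smat_def by (intro holo_at_vec_lambda holo_at_mult holo_at_vec_nth)

lemma holo_at_mat_1: "holo_at (\<lambda>y. mat 1 :: complex^'n::finite^'n) x"
  unfolding mat_def by (intro holo_at_vec_lambda holo_at_const)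

lemma holo_at_If: "holo_at f x \<Longrightarrow> holo_at g x \<Longrightarrow> holo_at (\<lambda>y. if P then f y else g y) x"
  by (cases P) simp_all

section \<open>Holomorphy on subsets\<close>

lemma holo_at_imp_holo_on:
  assumes "\<And>x. holo_at f x"
  shows "holo_on f A"
proof -
  have "holo_open f UNIV"
    using assms by (simp add: holo_open_iff_holo_at)
  then show ?thesis
    unfolding holo_on_def by (intro ballI exI[of _ UNIV] exI[of _ f]) simp
qed

lemma holo_on_subset:
  assumes "holo_on f A" and "B \<subseteq> A"
  shows "holo_on f B"
  unfolding holo_on_def
proof
  fix x assume "x \<in> B"
  then obtain W h where "open W" "x \<in> W" "holo_open h W" "\<forall>y\<in>A \<inter> W. h y = f y"
    using assms unfolding holo_on_def by blast
  then show "\<exists>W h. open W \<and> x \<in> W \<and> holo_open h W \<and> (\<forall>y\<in>B \<inter> W. h y = f y)"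
    using assms(2) by (intro exI[of _ W] exI[of _ h]) auto
qed

lemma holo_on_cong:
  assumes "holo_on f A" and "\<And>x. x \<in> A \<Longrightarrow> f x = g x"
  shows "holo_on g A"
  unfolding holo_on_def
proof
  fix x assume "x \<in> A"
  then obtain W h where "open W" "x \<in> W" "holo_open h W" "\<forall>y\<in>A \<inter> W. h y = f y"
    using assms unfolding holo_on_def by blast
  then show "\<exists>W h. open W \<and> x \<in> W \<and> holo_open h W \<and> (\<forall>y\<in>A \<inter> W. h y = g y)"
    using assms(2) by (intro exI[of _ W] exI[of _ h]) auto
qed

lemma holo_on_Pair:
  assumes "holo_on f A" and "holo_on g A"
  shows "holo_on (\<lambda>x. (f x, g x)) A"
  unfolding holo_on_def
proof
  fix x assume x: "x \<in> A"
  obtain W1 f1 where W1: "open W1" "x \<in> W1" "holo_open f1 W1" "\<forall>y\<in>A \<inter> W1. f1 y = f y"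
    using assms(1) x unfolding holo_on_def by blast
  obtain W2 g1 where W2: "open W2" "x \<in> W2" "holo_open g1 W2" "\<forall>y\<in>A \<inter> W2. g1 y = g y"
    using assms(2) x unfolding holo_on_def by blast
  have "holo_open (\<lambda>y. (f1 y, g1 y)) (W1 \<inter> W2)"
    using W1(1,3) W2(1,3) by (auto simp: holo_open_iff_holo_at intro: holo_at_Pair)
  then show "\<exists>W h. open W \<and> x \<in> W \<and> holo_open h W \<and> (\<forall>y\<in>A \<inter> W. h y = (f y, g y))"
    using W1 W2 by (intro exI[of _ "W1 \<inter> W2"] exI[of _ "\<lambda>y. (f1 y, g1 y)"] conjI) auto
qed

lemma holo_on_compose:
  assumes f: "holo_on f A" and g: "holo_on g B" and "f ` A \<subseteq> B"
  shows "holo_on (\<lambda>x. g (f x)) A"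
  unfolding holo_on_def
proof
  fix x assume x: "x \<in> A"
  obtain W1 f1 where W1: "open W1" "x \<in> W1" "holo_open f1 W1" "\<forall>y\<in>A \<inter> W1. f1 y = f y"
    using f x unfolding holo_on_def by blast
  have "f x \<in> B"
    using x assms(3) by blast
  then obtain W2 g1 where W2: "open W2" "f x \<in> W2" "holo_open g1 W2" "\<forall>y\<in>B \<inter> W2. g1 y = g y"
    using g unfolding holo_on_def by blast
  define W where "W = f1 -` W2 \<inter> W1"
  have "continuous_on W1 f1"
    using W1(3) unfolding holo_open_iff_holo_at
    by (auto intro!: continuous_at_imp_continuous_on holo_at_imp_isCont)
  then have "open W"
    unfolding W_def using W1(1) W2(1) continuous_on_open_vimage by blast
  moreover have "x \<in> W"
    unfolding W_def using W1 W2(2) x by auto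
  moreover have "holo_at (\<lambda>y. g1 (f1 y)) y" if "y \<in> W" for y
    using that W1(3) W2(3) unfolding W_def holo_open_iff_holo_at by (blast intro: holo_at_compose)
  moreover have "g1 (f1 y) = g (f y)" if "y \<in> A \<inter> W" for y
  proof -
    have "f1 y = f y" "f y \<in> B"
      using that W1(4) assms(3) unfolding W_def by auto
    then show ?thesis
      using that W2(4) unfolding W_def by auto
  qed
  ultimately show "\<exists>W h. open W \<and> x \<in> W \<and> holo_open h W \<and> (\<forall>y\<in>A \<inter> W. h y = g (f y))"
    unfolding holo_open_iff_holo_at by (intro exI[of _ W] exI[of _ "\<lambda>y. g1 (f1 y)"]) blast
qed

section \<open>SL(2,C) and the evaluation maps\<close>

definition adj2 :: "mat2 \<Rightarrow> mat2" where
  "adj2 A = (\<chi> i j. if i = 1 then (if j = 1 then A$2$2 else - A$1$2)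
                     else (if j = 1 then - A$2$1 else A$1$1))"

lemma matrix_mul_adj2: "det A = 1 \<Longrightarrow> A ** adj2 A = mat 1"
  by (simp add: vec_eq_iff forall_2 sum_2 adj2_def matrix_matrix_mult_def mat_def det_2 algebra_simps)

lemma adj2_matrix_mul: "det A = 1 \<Longrightarrow> adj2 A ** A = mat 1"
  by (simp add: vec_eq_iff forall_2 sum_2 adj2_def matrix_matrix_mult_def mat_def det_2 algebra_simps)

lemma matrix_inv_eq_adj2:
  assumes "det A = 1"
  shows "matrix_inv A = adj2 A"
proof -
  have inv: "matrix_inv A ** A = mat 1"
    unfolding matrix_inv_def
    by (rule someI2[of _ "adj2 A"]) (simp_all add: assms matrix_mul_adj2 adj2_matrix_mul)
  have "matrix_inv A = matrix_inv A ** (A ** adj2 A)"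
    by (simp add: assms matrix_mul_adj2)
  also have "\<dots> = adj2 A"
    by (simp add: matrix_mul_assoc inv)
  finally show ?thesis .
qed

lemma conjm_eq_adj2: "det A = 1 \<Longrightarrow> conjm A B = A ** B ** adj2 A"
  unfolding conjm_def by (simp add: matrix_inv_eq_adj2)

lemma holo_at_adj2: "holo_at f x \<Longrightarrow> holo_at (\<lambda>y. adj2 (f y)) x"
  unfolding adj2_def
  by (intro holo_at_vec_lambda holo_at_If holo_at_uminus holo_at_vec_nth)

definition ev_adj2 :: "'a word \<Rightarrow> mat2^'a::finite \<Rightarrow> mat2" where
  "ev_adj2 w \<eta> = foldr (\<lambda>(g, b) M. (if b then \<eta> $ g else adj2 (\<eta> $ g)) ** M) w (mat 1)"

lemma ev_adj2_eq_ev: "\<eta> \<in> Rvar \<Longrightarrow> ev_adj2 w \<eta> = ev w \<eta>"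
  by (induction w) (auto simp: ev_adj2_def ev_def Rvar_def SL2_def matrix_inv_eq_adj2)

lemma holo_at_ev_adj2: "holo_at (ev_adj2 w) x"
proof (induction w)
  case Nil
  show ?case
    unfolding ev_adj2_def by (simp add: holo_at_mat_1)
next
  case (Cons l w)
  have "holo_at (\<lambda>\<eta>. (if snd l then \<eta> $ fst l else adj2 (\<eta> $ fst l)) ** ev_adj2 w \<eta>) x"
    by (intro holo_at_matrix_mult holo_at_If holo_at_adj2 holo_at_vec_nth holo_at_ident Cons.IH)
  then show ?case
    by (simp add: ev_adj2_def split_beta)
qed

lemma holo_on_ev: "A \<subseteq> Rvar \<Longrightarrow> holo_on (ev w) A"
  by (rule holo_on_cong[OF holo_at_imp_holo_on[OF holo_at_ev_adj2]]) (auto simp: ev_adj2_eq_ev)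

section \<open>Standard neighbourhoods\<close>

lemma smat_1 [simp]: "smat 1 A = A"
  by (simp add: smat_def vec_eq_iff)

lemma smat_mem_PU: "z \<in> P \<Longrightarrow> v \<in> Ut \<Longrightarrow> smat z v \<in> PU P Ut"
  unfolding PU_def by blast

lemma std_nbhd_exp_chart:
  assumes "std_nbhd M U Ut \<epsilon>"
  obtains N where "inj_on mexp N" "holo_on mexp N" "holo_on (the_inv_into N mexp) (mexp ` N)"
    "PU (Pnbhd \<epsilon>) Ut \<subseteq> N"
  using assms unfolding std_nbhd_def biholo_onto_def Let_def by blast

lemma std_nbhd_subset_PU:
  assumes "std_nbhd M U Ut \<epsilon>"
  shows "Ut \<subseteq> PU (Pnbhd \<epsilon>) Ut"
proof -
  have "1 \<in> Pnbhd \<epsilon>"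
    using assms unfolding std_nbhd_def Pnbhd_def by (auto intro!: bexI[of _ 1])
  then show ?thesis
    using smat_mem_PU[of 1] by fastforce
qed

lemma std_nbhd_image: "std_nbhd M U Ut \<epsilon> \<Longrightarrow> U = mexp ` Ut"
  unfolding std_nbhd_def by blast

lemma std_nbhd_mexp_SL2:
  "std_nbhd M U Ut \<epsilon> \<Longrightarrow> z \<in> Pnbhd \<epsilon> \<Longrightarrow> v \<in> Ut \<Longrightarrow> mexp (smat z v) \<in> SL2"
  unfolding std_nbhd_def using smat_mem_PU by blast

lemma logS_mexp:
  assumes std: "std_nbhd M U Ut \<epsilon>" and "v \<in> Ut"
  shows "logS Ut (mexp v) = v"
proof -
  obtain N where "inj_on mexp N" "PU (Pnbhd \<epsilon>) Ut \<subseteq> N"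
    using std_nbhd_exp_chart[OF std] by metis
  moreover have "Ut \<subseteq> PU (Pnbhd \<epsilon>) Ut"
    using std by (rule std_nbhd_subset_PU)
  ultimately show ?thesis
    unfolding logS_def using \<open>v \<in> Ut\<close> by (intro the_equality) (auto dest: inj_onD)
qed

lemma logS_mem:
  assumes std: "std_nbhd M U Ut \<epsilon>" and "h \<in> U"
  shows "logS Ut h \<in> Ut"
  using \<open>h \<in> U\<close> unfolding std_nbhd_image[OF std] by (auto simp: logS_mexp[OF std])

lemma holo_on_logS:
  assumes std: "std_nbhd M U Ut \<epsilon>"
  shows "holo_on (logS Ut) U"
proof -
  obtain N where N: "inj_on mexp N" "holo_on (the_inv_into N mexp) (mexp ` N)"
    "PU (Pnbhd \<epsilon>) Ut \<subseteq> N"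
    using std_nbhd_exp_chart[OF std] by metis
  have "Ut \<subseteq> N"
    using std_nbhd_subset_PU[OF std] N(3) by blast
  then have "holo_on (the_inv_into N mexp) (mexp ` Ut)"
    using N(2) holo_on_subset by blast
  then show ?thesis
    unfolding std_nbhd_image[OF std]
    by (rule holo_on_cong) (use \<open>Ut \<subseteq> N\<close> N(1) in \<open>auto simp: logS_mexp[OF std] the_inv_into_f_f\<close>)
qed

lemma holo_on_mexp_PU: "std_nbhd M U Ut \<epsilon> \<Longrightarrow> holo_on mexp (PU (Pnbhd \<epsilon>) Ut)"
  using holo_on_subset std_nbhd_exp_chart by metis

lemma holo_on_deformation:
  fixes F G :: "mat2^'a::finite \<Rightarrow> mat2 \<Rightarrow> 'c::complex_space"
  assumes std: "std_nbhd M U Ut \<epsilon>" and V: "V \<subseteq> Rvar" "ev e ` V \<subseteq> U"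
    and F: "\<And>q. holo_at (\<lambda>q. F (fst q) (snd q)) q"
    and FG: "\<And>\<eta> A. \<eta> \<in> Rvar \<Longrightarrow> A \<in> SL2 \<Longrightarrow> F \<eta> A = G \<eta> A"
  shows "holo_on (\<lambda>(\<eta>, z). G \<eta> (mexp (smat z (logS Ut (ev e \<eta>))))) (V \<times> Pnbhd \<epsilon>)"
proof -
  define L where "L p = logS Ut (ev e (fst p))" for p :: "(mat2^'a) \<times> complex"
  have L_mem: "L p \<in> Ut" if "p \<in> V \<times> Pnbhd \<epsilon>" for p
    using that V(2) logS_mem[OF std] unfolding L_def by auto
  have "holo_on (\<lambda>p. ev e (fst p)) (V \<times> Pnbhd \<epsilon>)"
    by (rule holo_on_compose[OF holo_at_imp_holo_on[OF holo_at_fst] holo_on_ev[OF V(1)]]) auto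
  then have holo_L: "holo_on L (V \<times> Pnbhd \<epsilon>)"
    unfolding L_def by (rule holo_on_compose[OF _ holo_on_logS[OF std]]) (use V(2) in auto)
  have "holo_on (\<lambda>p. smat (snd p) (L p)) (V \<times> Pnbhd \<epsilon>)"
    using holo_on_compose[OF holo_on_Pair[OF holo_at_imp_holo_on[OF holo_at_snd] holo_L]
        holo_at_imp_holo_on[OF holo_at_smat[OF holo_at_fst holo_at_snd]] subset_UNIV]
    by simp
  then have holo_exp: "holo_on (\<lambda>p. mexp (smat (snd p) (L p))) (V \<times> Pnbhd \<epsilon>)"
    by (rule holo_on_compose[OF _ holo_on_mexp_PU[OF std]]) (auto intro: smat_mem_PU L_mem)
  have holo_F: "holo_on (\<lambda>p. F (fst p) (mexp (smat (snd p) (L p)))) (V \<times> Pnbhd \<epsilon>)"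
    using holo_on_compose[OF holo_on_Pair[OF holo_at_imp_holo_on[OF holo_at_fst] holo_exp]
        holo_at_imp_holo_on[OF F] subset_UNIV]
    by simp
  have FG_on: "F (fst p) (mexp (smat (snd p) (L p))) = G (fst p) (mexp (smat (snd p) (L p)))"
    if "p \<in> V \<times> Pnbhd \<epsilon>" for p
    using that V(1) by (intro FG) (auto intro: std_nbhd_mexp_SL2[OF std] L_mem)
  show ?thesis
    by (rule holo_on_cong[OF holo_F]) (use FG_on in \<open>simp add: L_def split_beta\<close>)
qed

lemma holo_on_conjugation_deformation:
  fixes e :: "'a::finite word"
  assumes "std_nbhd M U Ut \<epsilon>" and "V \<subseteq> Rvar" and "ev e ` V \<subseteq> U"
  shows "holo_on (\<lambda>(\<eta>, z). (\<chi> g. if g \<in> Y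
            then conjm (mexp (smat z (logS Ut (ev e \<eta>)))) (\<eta> $ g) else \<eta> $ g)) (V \<times> Pnbhd \<epsilon>)"
proof (rule holo_on_deformation[OF assms,
      where F = "\<lambda>\<eta> A. \<chi> g. if g \<in> Y then A ** \<eta> $ g ** adj2 A else \<eta> $ g"])
  show "holo_at (\<lambda>q. \<chi> g. if g \<in> Y then snd q ** fst q $ g ** adj2 (snd q) else fst q $ g) q"
    for q :: "(mat2^'a) \<times> mat2"
    by (intro holo_at_vec_lambda holo_at_If holo_at_matrix_mult holo_at_adj2 holo_at_vec_nth
        holo_at_fst holo_at_snd)
next
  fix \<eta> :: "mat2^'a" and A :: mat2
  assume "A \<in> SL2"
  then have "det A = 1"
    by (simp add: SL2_def)
  then show "(\<chi> g. if g \<in> Y then A ** \<eta> $ g ** adj2 A else \<eta> $ g) =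
      (\<chi> g. if g \<in> Y then conjm A (\<eta> $ g) else \<eta> $ g)"
    by (simp only: conjm_eq_adj2)
qed

lemma holo_on_translation_deformation:
  fixes e :: "'a::finite word"
  assumes "std_nbhd M U Ut \<epsilon>" and "V \<subseteq> Rvar" and "ev e ` V \<subseteq> U"
  shows "holo_on (\<lambda>(\<eta>, z). (\<chi> g. if g = t
            then (\<eta> $ t) ** mexp (smat z (logS Ut (ev e \<eta>))) else \<eta> $ g)) (V \<times> Pnbhd \<epsilon>)"
proof (rule holo_on_deformation[OF assms, where F = "\<lambda>\<eta> A. \<chi> g. if g = t then \<eta> $ t ** A else \<eta> $ g"])
  show "holo_at (\<lambda>q. \<chi> g. if g = t then fst q $ t ** snd q else fst q $ g) q"
    for q :: "(mat2^'a) \<times> mat2"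
    by (intro holo_at_vec_lambda holo_at_If holo_at_matrix_mult holo_at_vec_nth holo_at_fst holo_at_snd)
qed simp

theorem lemma3p4:
  fixes Y :: "'a::finite set" and e :: "'a word" and \<rho> :: "mat2^'a"
    and U Ut :: "mat2 set" and \<epsilon> :: real and V :: "(mat2^'a) set"
    and t :: "'b::finite" and e' :: "'b word" and \<rho>' :: "mat2^'b"
    and U' Ut' :: "mat2 set" and \<epsilon>' :: real and V' :: "(mat2^'b) set"
  shows
  "(word_in e Y \<and> \<rho> \<in> Rvar \<and> trace (ev e \<rho>) \<noteq> -2 \<and>
     std_nbhd (ev e \<rho>) U Ut \<epsilon> \<and>
     openin (top_of_set Rvar) V \<and> \<rho> \<in> V \<and> ev e ` V \<subseteq> U
   \<longrightarrow> holo_on (\<lambda>(\<eta>, z). (\<chi> g. if g \<in> Y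
                  then conjm (mexp (smat z (logS Ut (ev e \<eta>)))) (\<eta> $ g)
                  else \<eta> $ g)) (V \<times> Pnbhd \<epsilon>))
   \<and>
   (word_in e' (- {t}) \<and> \<rho>' \<in> Rvar \<and> trace (ev e' \<rho>') \<noteq> -2 \<and>
     std_nbhd (ev e' \<rho>') U' Ut' \<epsilon>' \<and>
     openin (top_of_set Rvar) V' \<and> \<rho>' \<in> V' \<and> ev e' ` V' \<subseteq> U'
   \<longrightarrow> holo_on (\<lambda>(\<eta>, z). (\<chi> g. if g = t
                  then (\<eta> $ t) ** mexp (smat z (logS Ut' (ev e' \<eta>)))
                  else \<eta> $ g)) (V' \<times> Pnbhd \<epsilon>'))"
  by (auto dest!: openin_imp_subset
      intro!: holo_on_conjugation_deformation holo_on_translation_deformation)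

end
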